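(* Let $A$ be a finite set of agents and $(M_U)_{U\subseteq A}$ a dynamic network model on $A$, with associated full-information protocol complex functor $F:\Gamma\to\Gamma^{\mathrm{op}}\mathbf{Set}$ and its left Yoneda extension $F_!:\Gamma^{\mathrm{op}}\mathbf{Set}\to\Gamma^{\mathrm{op}}\mathbf{Set}$. Then there is a morphism of csets $\pi_X:F_!(X)\to X$ for every cset $X$, natural in $X$; in particular every cset $X$ carries an $F_!$-algebra structure $\pi_X:F_!(X)\to X$. (On a standard simplex, $\pi_{\Gamma[U]}:F(U)\to\Gamma[U]$ sends every $V$-simplex of $F(U)$ to the unique $V$-simplex of $\Gamma[U]$.)
   Context: $\Gamma$ is the poset category of subsets of $A$ ordered by inclusion, with unique morphism $\delta_{U,V}:U\to V$ when $U\subseteq V$. A cset (chromatic augmented semi-simplicial set) is a functor $X:\Gamma^{\mathrm{op}}\to\mathbf{Set}$; elements of $X(U)$ are called $U$-simplices and $\partial_{U,V}=X(\delta_{U,V}):X(V)\to X(U)$ are the face maps; morphisms of csets are natural transformations. $\Gamma[U]=\Gamma(-,U)$ is the representable cset: $\Gamma[U](T)$ is a singleton if $T\subseteq U$ and empty otherwise. For a functor $G:\Gamma\to\Gamma^{\mathrm{op}}\mathbf{Set}$, its left Yoneda extension $G_!$ is the (up to isomorphism unique) colimit-preserving functor $\Gamma^{\mathrm{op}}\mathbf{Set}\to\Gamma^{\mathrm{op}}\mathbf{Set}$ with $G_!(\Gamma[U])=G(U)$ naturally in $U$; explicitly $G_!(X)=\mathrm{colim}_{(U,x\in X(U))}G(U)$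 over the category of elements of $X$. A communication graph on a set $U$ is a directed graph $G\subseteq U\times U$; agent $a$ is active in $G$ if $(a,a)\in G$, and the view of an active agent $a$ is $\mathrm{view}_G(a)=\{b\mid (b,a)\in G\}$; $\mathrm{Active}(G)$ is the set of active agents. A dynamic network model is a family $(M_U)_{U\subseteq A}$ where each $M_U$ is a set of communication graphs on $U$. The full-information protocol complex functor $F$ is: $F(U)(V)=\emptyset$ if $V\not\subseteq U$; otherwise $F(U)(V)=\{\{(v,\mathrm{view}_G(v))\mid v\in V\}\mid G\in M_{U'}\text{ for some }U'\subseteq U,\ V\subseteq \mathrm{Active}(G)\}$; face maps $F(U)(\delta_{V,W})$ send $\{(w,\mathrm{view}_G(w))\mid w\in W\}$ to $\{(v,\mathrm{view}_G(v))\mid v\in V\}$; and for $U\subseteq T$, $F(\delta_{U,T}):F(U)\to F(T)$ is the evident inclusion $\{(v,\mathrm{view}_G(v))\}_{v\in V}\mapsto\{(v,\mathrm{view}_G(v))\}_{v\in V}$. *)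

theory Defs
  imports Main
begin

text \<open>A cset over A is represented by a family of simplex sets X U (U a subset of A)
together with face maps d U V : X V \<rightarrow> X U for U \<subseteq> V \<subseteq> A, satisfying functoriality.\<close>

definition is_cset :: "'a set \<Rightarrow> ('a set \<Rightarrow> 'x set) \<Rightarrow> ('a set \<Rightarrow> 'a set \<Rightarrow> 'x \<Rightarrow> 'x) \<Rightarrow> bool" where
  "is_cset A X d \<longleftrightarrow>
     (\<forall>U V. U \<subseteq> V \<and> V \<subseteq> A \<longrightarrow> (\<forall>x\<in>X V. d U V x \<in> X U)) \<and>
     (\<forall>U. U \<subseteq> A \<longrightarrow> (\<forall>x\<in>X U. d U U x = x)) \<and>
     (\<forall>U V W. U \<subseteq> V \<and> V \<subseteq> W \<and> W \<subseteq> A \<longrightarrow> (\<forall>x\<in>X W. d U V (d V W x) = d U W x))"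

definition is_cset_mor :: "'a set \<Rightarrow> ('a set \<Rightarrow> 'x set) \<Rightarrow> ('a set \<Rightarrow> 'a set \<Rightarrow> 'x \<Rightarrow> 'x)
    \<Rightarrow> ('a set \<Rightarrow> 'y set) \<Rightarrow> ('a set \<Rightarrow> 'a set \<Rightarrow> 'y \<Rightarrow> 'y) \<Rightarrow> ('a set \<Rightarrow> 'x \<Rightarrow> 'y) \<Rightarrow> bool" where
  "is_cset_mor A X dX Y dY f \<longleftrightarrow>
     (\<forall>U. U \<subseteq> A \<longrightarrow> (\<forall>x\<in>X U. f U x \<in> Y U)) \<and>
     (\<forall>U V. U \<subseteq> V \<and> V \<subseteq> A \<longrightarrow> (\<forall>x\<in>X V. f U (dX U V x) = dY U V (f V x)))"

definition Active :: "('a \<times> 'a) set \<Rightarrow> 'a set" where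
  "Active G = {a. (a, a) \<in> G}"

definition view :: "('a \<times> 'a) set \<Rightarrow> 'a \<Rightarrow> 'a set" where
  "view G a = {b. (b, a) \<in> G}"

definition dyn_model :: "'a set \<Rightarrow> ('a set \<Rightarrow> ('a \<times> 'a) set set) \<Rightarrow> bool" where
  "dyn_model A M \<longleftrightarrow> (\<forall>U. U \<subseteq> A \<longrightarrow> (\<forall>G\<in>M U. G \<subseteq> U \<times> U))"

text \<open>F(U)(V): the V-simplices of the protocol complex F(U).\<close>
definition Fpc :: "('a set \<Rightarrow> ('a \<times> 'a) set set) \<Rightarrow> 'a set \<Rightarrow> 'a set \<Rightarrow> ('a \<times> 'a set) set set" where
  "Fpc M U V = (if V \<subseteq> U then
      {{(v, view G v) | v. v \<in> V} | G U'. U' \<subseteq> U \<and> G \<in> M U' \<and> V \<subseteq> Active G}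
    else {})"

text \<open>Face map F(U)(\<delta>_{V,W}) (independent of U): restriction to the agents in V.\<close>
definition Fface :: "'a set \<Rightarrow> ('a \<times> 'a set) set \<Rightarrow> ('a \<times> 'a set) set" where
  "Fface V s = {p \<in> s. fst p \<in> V}"

text \<open>The maps F(\<delta>_{U,T}) : F(U) \<rightarrow> F(T) are inclusions, so they act as identity on simplices.\<close>

text \<open>Elements of the disjoint union, at dimension V: triples (U, x, s) with x a U-simplex
of X and s a V-simplex of F(U).\<close>
definition Lext_pre :: "'a set \<Rightarrow> ('a set \<Rightarrow> ('a \<times> 'a) set set) \<Rightarrow> ('a set \<Rightarrow> 'x set) \<Rightarrow> 'a set
    \<Rightarrow> ('a set \<times> 'x \<times> ('a \<times> 'a set) set) set" where
  "Lext_pre A M X V = {(U, x, s). U \<subseteq> A \<and> x \<in> X U \<and> s \<in> Fpc M U V}"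

text \<open>Generating identifications: for a morphism (U, d U T y) \<rightarrow> (T, y) of the category of
elements, (U, d U T y, s) is identified with (T, y, F(\<delta>_{U,T}) s) = (T, y, s).\<close>
definition Lext_step :: "'a set \<Rightarrow> ('a set \<Rightarrow> ('a \<times> 'a) set set) \<Rightarrow> ('a set \<Rightarrow> 'x set)
    \<Rightarrow> ('a set \<Rightarrow> 'a set \<Rightarrow> 'x \<Rightarrow> 'x) \<Rightarrow> 'a set
    \<Rightarrow> (('a set \<times> 'x \<times> ('a \<times> 'a set) set) \<times> ('a set \<times> 'x \<times> ('a \<times> 'a set) set)) set" where
  "Lext_step A M X d V = {((U, d U T y, s), (T, y, s)) | U T y s.
      U \<subseteq> T \<and> T \<subseteq> A \<and> y \<in> X T \<and> s \<in> Fpc M U V}"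

definition Lext_rel where
  "Lext_rel A M X d V = (Lext_step A M X d V \<union> (Lext_step A M X d V)\<inverse>)\<^sup>*"

definition Lext :: "'a set \<Rightarrow> ('a set \<Rightarrow> ('a \<times> 'a) set set) \<Rightarrow> ('a set \<Rightarrow> 'x set)
    \<Rightarrow> ('a set \<Rightarrow> 'a set \<Rightarrow> 'x \<Rightarrow> 'x) \<Rightarrow> 'a set \<Rightarrow> ('a set \<times> 'x \<times> ('a \<times> 'a set) set) set set" where
  "Lext A M X d V = Lext_pre A M X V // Lext_rel A M X d V"

definition Lext_face where
  "Lext_face A M X d V W c =
     (case SOME r. r \<in> c of (U, x, s) \<Rightarrow> Lext_rel A M X d V `` {(U, x, Fface V s)})"

definition Lext_map where
  "Lext_map A M Y dY f V c =
     (case SOME r. r \<in> c of (U, x, s) \<Rightarrow> Lext_rel A M Y dY V `` {(U, f U x, s)})"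

definition pi_alg :: "('a set \<Rightarrow> 'a set \<Rightarrow> 'x \<Rightarrow> 'x) \<Rightarrow> 'a set
    \<Rightarrow> ('a set \<times> 'x \<times> ('a \<times> 'a set) set) set \<Rightarrow> 'x" where
  "pi_alg d V c = (case SOME r. r \<in> c of (U, x, s) \<Rightarrow> d V U x)"

end

theory Submission
  imports Defs
begin

text \<open>
  The class of a triple (U, x, s), with x a U-simplex of X and s a V-simplex of F(U), is sent
  to the V-face of x; this is only meaningful because s can exist only when V \<subseteq> U.
  The generating identification (U, d U T y, s) \<sim> (T, y, s) leaves this value unchanged,
  since d V U (d U T y) = d V T y, so it is constant on classes.  Compatibility with face
  maps and naturality in X are then functoriality of X and naturality of f, evaluated on a
  representative.  Neither the finiteness of A nor the shape of the network model plays a role.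
\<close>

definition pi_rep :: "('a set \<Rightarrow> 'a set \<Rightarrow> 'x \<Rightarrow> 'x) \<Rightarrow> 'a set
    \<Rightarrow> ('a set \<times> 'x \<times> ('a \<times> 'a set) set) \<Rightarrow> 'x" where
  "pi_rep d V r = (case r of (U, x, s) \<Rightarrow> d V U x)"

lemma pi_alg_eq_pi_rep_some: "pi_alg d V c = pi_rep d V (SOME r. r \<in> c)"
  unfolding pi_alg_def pi_rep_def ..

lemma Fpc_subset: "s \<in> Fpc M U V \<Longrightarrow> V \<subseteq> U"
  unfolding Fpc_def by (auto split: if_splits)

lemma Fpc_mono: "s \<in> Fpc M U V \<Longrightarrow> U \<subseteq> T \<Longrightarrow> s \<in> Fpc M T V"
  unfolding Fpc_def by (auto split: if_splits) blast

lemma Fface_in_Fpc: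
  assumes s: "s \<in> Fpc M T V" and UV: "U \<subseteq> V"
  shows "Fface U s \<in> Fpc M T U"
proof -
  have VT: "V \<subseteq> T" using s by (rule Fpc_subset)
  from s VT obtain G U' where G: "s = {(v, view G v) | v. v \<in> V}"
      "U' \<subseteq> T" "G \<in> M U'" "V \<subseteq> Active G"
    unfolding Fpc_def by auto
  have "Fface U s = {(v, view G v) | v. v \<in> U}"
    unfolding Fface_def G(1) using UV by auto
  moreover have "U \<subseteq> T" "U \<subseteq> Active G" using UV VT G(4) by auto
  ultimately show ?thesis
    unfolding Fpc_def using G(2,3) by auto
qed

lemma is_cset_face_closed:
  "is_cset A X d \<Longrightarrow> U \<subseteq> V \<Longrightarrow> V \<subseteq> A \<Longrightarrow> x \<in> X V \<Longrightarrow> d U V x \<in> X U"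
  unfolding is_cset_def by (elim conjE) (drule spec[of _ U], drule spec[of _ V], simp)

lemma is_cset_face_comp:
  "is_cset A X d \<Longrightarrow> U \<subseteq> V \<Longrightarrow> V \<subseteq> W \<Longrightarrow> W \<subseteq> A \<Longrightarrow> x \<in> X W
    \<Longrightarrow> d U V (d V W x) = d U W x"
  unfolding is_cset_def
  by (elim conjE) (drule spec[of _ U], drule spec[of _ V], drule spec[of _ W], simp)

lemma is_cset_mor_closed:
  "is_cset_mor A X dX Y dY f \<Longrightarrow> U \<subseteq> A \<Longrightarrow> x \<in> X U \<Longrightarrow> f U x \<in> Y U"
  unfolding is_cset_mor_def by blast

lemma is_cset_mor_natural:
  "is_cset_mor A X dX Y dY f \<Longrightarrow> U \<subseteq> V \<Longrightarrow> V \<subseteq> A \<Longrightarrow> x \<in> X V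
    \<Longrightarrow> f U (dX U V x) = dY U V (f V x)"
  unfolding is_cset_mor_def by blast

lemma Lext_step_pi_rep:
  assumes X: "is_cset A X d" and step: "(a, b) \<in> Lext_step A M X d V"
  shows "a \<in> Lext_pre A M X V \<and> b \<in> Lext_pre A M X V \<and> pi_rep d V a = pi_rep d V b"
proof -
  from step obtain U T y s where e: "a = (U, d U T y, s)" "b = (T, y, s)"
      "U \<subseteq> T" "T \<subseteq> A" "y \<in> X T" "s \<in> Fpc M U V"
    unfolding Lext_step_def by blast
  have "V \<subseteq> U" using e(6) by (rule Fpc_subset)
  then have "d V U (d U T y) = d V T y"
    using is_cset_face_comp[OF X _ e(3-5)] by blast
  moreover have "d U T y \<in> X U" using is_cset_face_closed[OF X e(3-5)] .
  moreover have "s \<in> Fpc M T V" using e(6,3) by (rule Fpc_mono)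
  ultimately show ?thesis
    using e unfolding Lext_pre_def pi_rep_def by auto
qed

lemma Lext_rel_pi_rep:
  assumes X: "is_cset A X d" and r0: "r0 \<in> Lext_pre A M X V"
    and rel: "(r0, r) \<in> Lext_rel A M X d V"
  shows "r \<in> Lext_pre A M X V \<and> pi_rep d V r = pi_rep d V r0"
  using rel unfolding Lext_rel_def
proof (induction rule: rtrancl_induct)
  case base
  show ?case using r0 by simp
next
  case (step r r')
  then show ?case using Lext_step_pi_rep[OF X] by (metis UnE converseD)
qed

lemma Lext_class_of_rep:
  "r \<in> Lext_pre A M X V \<Longrightarrow> Lext_rel A M X d V `` {r} \<in> Lext A M X d V"
  "r \<in> Lext_rel A M X d V `` {r}"
  unfolding Lext_def Lext_rel_def by (auto intro: quotientI)

lemma some_in_Lext_class: "c \<in> Lext A M X d V \<Longrightarrow> (SOME r. r \<in> c) \<in> c"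
  unfolding Lext_def by (erule quotientE) (metis Lext_class_of_rep(2) someI)

lemma Lext_class_rep:
  assumes X: "is_cset A X d" and c: "c \<in> Lext A M X d V" and r: "r \<in> c"
  shows "r \<in> Lext_pre A M X V" and "pi_alg d V c = pi_rep d V r"
proof -
  from c obtain r0 where r0: "r0 \<in> Lext_pre A M X V" and c_eq: "c = Lext_rel A M X d V `` {r0}"
    unfolding Lext_def by (rule quotientE)
  have rep: "r' \<in> Lext_pre A M X V \<and> pi_rep d V r' = pi_rep d V r0" if "r' \<in> c" for r'
    using Lext_rel_pi_rep[OF X r0] that c_eq by blast
  show "r \<in> Lext_pre A M X V" using rep[OF r] ..
  show "pi_alg d V c = pi_rep d V r"
    unfolding pi_alg_eq_pi_rep_some using rep[OF r] rep[OF some_in_Lext_class[OF c]] by simp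
qed

lemma pi_alg_class:
  "is_cset A X d \<Longrightarrow> r \<in> Lext_pre A M X V
    \<Longrightarrow> pi_alg d V (Lext_rel A M X d V `` {r}) = pi_rep d V r"
  using Lext_class_rep(2) Lext_class_of_rep by metis

lemma pi_alg_is_cset_mor:
  assumes X: "is_cset A X d"
  shows "is_cset_mor A (Lext A M X d) (Lext_face A M X d) X d (pi_alg d)"
  unfolding is_cset_mor_def
proof (intro conjI allI impI ballI)
  fix V c assume c: "c \<in> Lext A M X d V"
  obtain U x s where r: "(U, x, s) \<in> c" using some_in_Lext_class[OF c] by (metis prod_cases3)
  have "(U, x, s) \<in> Lext_pre A M X V" using Lext_class_rep(1)[OF X c r] .
  then have "U \<subseteq> A" "x \<in> X U" "V \<subseteq> U"
    unfolding Lext_pre_def by (auto dest: Fpc_subset)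
  then show "pi_alg d V c \<in> X V"
    using Lext_class_rep(2)[OF X c r] is_cset_face_closed[OF X] by (simp add: pi_rep_def)
next
  fix U V c assume UV: "U \<subseteq> V \<and> V \<subseteq> A" and c: "c \<in> Lext A M X d V"
  obtain T x s where r: "(SOME r. r \<in> c) = (T, x, s)" by (rule prod_cases3)
  then have r_in: "(T, x, s) \<in> c" using some_in_Lext_class[OF c] by simp
  have "(T, x, s) \<in> Lext_pre A M X V" using Lext_class_rep(1)[OF X c r_in] .
  then have T: "T \<subseteq> A" "x \<in> X T" "s \<in> Fpc M T V" and VT: "V \<subseteq> T"
    unfolding Lext_pre_def by (auto dest: Fpc_subset)
  have "(T, x, Fface U s) \<in> Lext_pre A M X U"
    using T UV Fface_in_Fpc unfolding Lext_pre_def by blast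
  then have "pi_alg d U (Lext_face A M X d U V c) = d U T x"
    unfolding Lext_face_def r by (simp add: pi_alg_class[OF X] pi_rep_def)
  also have "\<dots> = d U V (d V T x)"
    using is_cset_face_comp[OF X _ VT T(1,2)] UV by simp
  also have "d V T x = pi_alg d V c"
    using Lext_class_rep(2)[OF X c r_in] by (simp add: pi_rep_def)
  finally show "pi_alg d U (Lext_face A M X d U V c) = d U V (pi_alg d V c)" .
qed

lemma pi_alg_natural:
  assumes X: "is_cset A X dX" and Y: "is_cset A Y dY" and f: "is_cset_mor A X dX Y dY f"
    and c: "c \<in> Lext A M X dX V"
  shows "pi_alg dY V (Lext_map A M Y dY f V c) = f V (pi_alg dX V c)"
proof -
  obtain U x s where r: "(SOME r. r \<in> c) = (U, x, s)" by (rule prod_cases3)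
  then have r_in: "(U, x, s) \<in> c" using some_in_Lext_class[OF c] by simp
  have "(U, x, s) \<in> Lext_pre A M X V" using Lext_class_rep(1)[OF X c r_in] .
  then have U: "U \<subseteq> A" "x \<in> X U" "s \<in> Fpc M U V" and VU: "V \<subseteq> U"
    unfolding Lext_pre_def by (auto dest: Fpc_subset)
  have "(U, f U x, s) \<in> Lext_pre A M Y V"
    using U is_cset_mor_closed[OF f] unfolding Lext_pre_def by blast
  then have "pi_alg dY V (Lext_map A M Y dY f V c) = dY V U (f U x)"
    unfolding Lext_map_def r by (simp add: pi_alg_class[OF Y] pi_rep_def)
  also have "\<dots> = f V (dX V U x)"
    using is_cset_mor_natural[OF f VU U(1,2)] by simp
  also have "dX V U x = pi_alg dX V c"
    using Lext_class_rep(2)[OF X c r_in] by (simp add: pi_rep_def)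
  finally show ?thesis .
qed

theorem proposition1:
  fixes A :: "'a set" and M :: "'a set \<Rightarrow> ('a \<times> 'a) set set"
  assumes "finite A" and "dyn_model A M"
  shows "(\<forall>(X :: 'a set \<Rightarrow> 'x set) d. is_cset A X d \<longrightarrow>
            is_cset_mor A (Lext A M X d) (Lext_face A M X d) X d (pi_alg d))
       \<and> (\<forall>(X :: 'a set \<Rightarrow> 'x set) dX (Y :: 'a set \<Rightarrow> 'y set) dY f.
            is_cset A X dX \<longrightarrow> is_cset A Y dY \<longrightarrow> is_cset_mor A X dX Y dY f \<longrightarrow>
            (\<forall>V. V \<subseteq> A \<longrightarrow> (\<forall>c \<in> Lext A M X dX V.
               pi_alg dY V (Lext_map A M Y dY f V c) = f V (pi_alg dX V c))))"
  using pi_alg_is_cset_mor pi_alg_natural by blast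

end
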